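(* Let $(k,|\cdot|)$ be a complete valued field and $\mu$ a probability measure with countable support on $\mathrm{SL}(2,k)$, supported on upper triangular matrices $\gamma=\begin{pmatrix}\alpha(\gamma)&\beta(\gamma)\\0&\alpha(\gamma)^{-1}\end{pmatrix}$, and such that there exists $\delta>0$ with $\int(\log\|\gamma\|)^{1+\delta}\,d\mu(\gamma)<\infty$. Then $$\chi(\mu)=\left|\int\log|\alpha(\gamma)|\,d\mu(\gamma)\right|=\frac12\left|\int\log|a(\gamma)|\,d\mu(\gamma)\right|,$$ where $a(\gamma)=\alpha(\gamma)^2$. In particular, if $\mu$ is symmetric then $\chi(\mu)=0$.
   Context: $\|\cdot\|$ is the operator norm on $\mathrm{SL}(2,k)$ associated to the max norm on $k^2$ (for non-Archimedean $k$, the max of the entries' absolute values). $\chi(\mu)=\lim_n\frac1n\int\log\|\gamma\|\,d\mu^n(\gamma)$ with $\mu^n$ the $n$-th convolution power. Symmetric means invariant under $\gamma\mapsto\gamma^{-1}$. Upper triangular matrices correspond to affine Möbius maps $z\mapsto a z+b$ with $a=\alpha^2$, $b=\alpha\beta$. *)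

theory Defs
  imports "HOL-Probability.Probability"
begin

definition abs_value :: "('k::field \<Rightarrow> real) \<Rightarrow> bool" where
  "abs_value v \<longleftrightarrow> (\<forall>x. 0 \<le> v x) \<and> (\<forall>x. v x = 0 \<longleftrightarrow> x = 0)
     \<and> (\<forall>x y. v (x * y) = v x * v y) \<and> (\<forall>x y. v (x + y) \<le> v x + v y)"

definition complete_wrt :: "('k::field \<Rightarrow> real) \<Rightarrow> bool" where
  "complete_wrt v \<longleftrightarrow> (\<forall>X::nat \<Rightarrow> 'k.
      (\<forall>e>0. \<exists>N. \<forall>m\<ge>N. \<forall>n\<ge>N. v (X m - X n) < e) \<longrightarrow>
      (\<exists>L. \<forall>e>0. \<exists>N. \<forall>n\<ge>N. v (X n - L) < e))"

text \<open>2x2 matrices ((a,b),(c,d)) written as (a,b,c,d); vectors in k^2 as pairs.\<close>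
type_synonym 'k mat2 = "'k \<times> 'k \<times> 'k \<times> 'k"

fun mmult :: "'k::field mat2 \<Rightarrow> 'k mat2 \<Rightarrow> 'k mat2" where
  "mmult (a, b, c, d) (a', b', c', d') =
     (a * a' + b * c', a * b' + b * d', c * a' + d * c', c * b' + d * d')"

definition mone :: "'k::field mat2" where "mone = (1, 0, 0, 1)"

fun mdet :: "'k::field mat2 \<Rightarrow> 'k" where "mdet (a, b, c, d) = a * d - b * c"

text \<open>Inverse of a matrix of determinant 1.\<close>
fun minv_sl2 :: "'k::field mat2 \<Rightarrow> 'k mat2" where
  "minv_sl2 (a, b, c, d) = (d, - b, - c, a)"

fun mapply :: "'k::field mat2 \<Rightarrow> 'k \<times> 'k \<Rightarrow> 'k \<times> 'k" where
  "mapply (a, b, c, d) (x, y) = (a * x + b * y, c * x + d * y)"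

fun entry11 :: "'k::field mat2 \<Rightarrow> 'k" where "entry11 (a, b, c, d) = a"
fun entry21 :: "'k::field mat2 \<Rightarrow> 'k" where "entry21 (a, b, c, d) = c"

fun maxnorm :: "('k::field \<Rightarrow> real) \<Rightarrow> 'k \<times> 'k \<Rightarrow> real" where
  "maxnorm v (x, y) = max (v x) (v y)"

definition opnorm :: "('k::field \<Rightarrow> real) \<Rightarrow> 'k mat2 \<Rightarrow> real" where
  "opnorm v g = Sup {maxnorm v (mapply g x) / maxnorm v x | x. x \<noteq> (0, 0)}"

primrec conv_pow :: "'k::field mat2 pmf \<Rightarrow> nat \<Rightarrow> 'k mat2 pmf" where
  "conv_pow \<mu> 0 = return_pmf mone"
| "conv_pow \<mu> (Suc n) = bind_pmf (conv_pow \<mu> n) (\<lambda>g. map_pmf (\<lambda>h. mmult g h) \<mu>)"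

end

theory Submission
  imports Defs
begin

text \<open>Write P_n = g_1 \<cdots> g_n for a product of independent \<mu>-distributed upper triangular matrices,
  so that its diagonal is (\<alpha>_1 \<cdots> \<alpha>_n, (\<alpha>_1 \<cdots> \<alpha>_n)^-1). Both diagonal entries are at most ||P_n||
  in absolute value, so E log ||P_n|| \<ge> |E log |\<alpha>_1 \<cdots> \<alpha>_n|| = n |E log |\<alpha>||. Conversely, expanding the off-diagonal
  entry of P_n bounds log ||P_n|| by log (2 (n + 1)) plus the largest log ||g_i|| plus the maxima of
  the partial sums of log |\<alpha>_i| from the left and of - log |\<alpha>_i| from the right. A first moment
  maximal inequality for i.i.d. sums (truncation, then an L^2 estimate along blocks) shows that the
  two maxima have expectation n max (\<pm> E log |\<alpha>|, 0) + o(n), and the largest log ||g_i|| has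
  expectation o(n). Hence E log ||P_n|| = n |E log |\<alpha>|| + o(n).

  The moment hypothesis is used only to make log ||\<gamma>|| integrable.\<close>

section \<open>Independent samples\<close>

lemma integrable_pmf_bounded:
  fixes f :: "'a \<Rightarrow> real"
  assumes "\<And>x. x \<in> set_pmf p \<Longrightarrow> \<bar>f x\<bar> \<le> B"
  shows "integrable (measure_pmf p) f"
  by (rule measure_pmf.integrable_const_bound[where B=B]) (use assms in \<open>auto intro: AE_pmfI\<close>)

lemma sum_list_le_length_mult:
  fixes f :: "'a \<Rightarrow> real" and c :: real
  assumes "\<And>x. x \<in> set xs \<Longrightarrow> f x \<le> c"
  shows "sum_list (map f xs) \<le> length xs * c"
  using assms by (induction xs) (auto simp: algebra_simps intro!: add_mono)

lemma abs_sum_list_le_length_mult: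
  fixes f :: "'a \<Rightarrow> real" and c :: real
  assumes "\<And>x. \<bar>f x\<bar> \<le> c"
  shows "\<bar>sum_list (map f xs)\<bar> \<le> length xs * c"
proof -
  have "\<bar>sum_list (map f xs)\<bar> \<le> sum_list (map (\<lambda>x. \<bar>f x\<bar>) xs)"
    by (induction xs) (auto intro: order_trans[OF abs_triangle_ineq])
  also have "\<dots> \<le> length xs * c"
    by (rule sum_list_le_length_mult) (use assms in auto)
  finally show ?thesis .
qed

lemma square_bound_sum_list:
  fixes y :: "'a \<Rightarrow> real" and c :: real
  assumes "\<And>x. \<bar>y x\<bar> \<le> c"
  shows "(sum_list (map y xs))\<^sup>2 \<le> (length xs * c)\<^sup>2"
  using power_mono[OF abs_sum_list_le_length_mult[OF assms, where xs=xs] abs_ge_zero, where n=2]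
  by simp

lemma replicate_pmf_Suc_Cons:
  "replicate_pmf (Suc n) p = map_pmf (\<lambda>(x, xs). x # xs) (pair_pmf p (replicate_pmf n p))"
  by (simp add: pair_pmf_def map_bind_pmf bind_return_pmf map_pmf_def bind_assoc_pmf)

lemma replicate_pmf_Suc_snoc:
  "replicate_pmf (Suc n) p = bind_pmf (replicate_pmf n p) (\<lambda>xs. map_pmf (\<lambda>x. xs @ [x]) p)"
  using replicate_pmf_distrib[of n 1 p]
  by (simp add: replicate_pmf_1 map_pmf_def bind_assoc_pmf bind_return_pmf)

lemma set_pmf_replicate_pmfD:
  "xs \<in> set_pmf (replicate_pmf n p) \<Longrightarrow> length xs = n \<and> set xs \<subseteq> set_pmf p"
  by (auto simp: set_replicate_pmf)

lemma AE_replicate_pmf: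
  "AE xs in measure_pmf (replicate_pmf n p). length xs = n \<and> set xs \<subseteq> set_pmf p"
  by (rule AE_pmfI) (rule set_pmf_replicate_pmfD)

lemma map_pmf_take_replicate_pmf:
  assumes "j \<le> n"
  shows "map_pmf (take j) (replicate_pmf n p) = replicate_pmf j p"
proof -
  have "map_pmf (take j) (replicate_pmf (j + (n - j)) p)
      = bind_pmf (replicate_pmf j p) (\<lambda>xs. bind_pmf (replicate_pmf (n - j) p) (\<lambda>_. return_pmf xs))"
    unfolding replicate_pmf_distrib map_bind_pmf map_return_pmf
    by (intro bind_pmf_cong refl) (auto dest: set_pmf_replicate_pmfD)
  then show ?thesis
    using assms by (simp add: bind_return_pmf')
qed

lemma map_pmf_rev_replicate_pmf: "map_pmf rev (replicate_pmf n p) = replicate_pmf n p"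
proof (induction n)
  case (Suc n)
  have "map_pmf rev (replicate_pmf (Suc n) p)
      = bind_pmf p (\<lambda>x. bind_pmf (map_pmf rev (replicate_pmf n p)) (\<lambda>ys. return_pmf (ys @ [x])))"
    by (simp add: map_bind_pmf bind_map_pmf bind_return_pmf map_pmf_def bind_assoc_pmf)
  also have "\<dots> = bind_pmf (replicate_pmf n p) (\<lambda>ys. bind_pmf p (\<lambda>x. return_pmf (ys @ [x])))"
    using Suc.IH by (subst bind_commute_pmf) simp
  also have "\<dots> = replicate_pmf (Suc n) p"
    unfolding replicate_pmf_Suc_snoc map_pmf_def ..
  finally show ?case .
qed simp

lemma
  fixes f :: "'a list \<Rightarrow> real"
  shows integrable_rev_replicate_pmf:
      "integrable (measure_pmf (replicate_pmf n p)) (\<lambda>xs. f (rev xs))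
       \<longleftrightarrow> integrable (measure_pmf (replicate_pmf n p)) f"
    and expectation_rev_replicate_pmf:
      "measure_pmf.expectation (replicate_pmf n p) (\<lambda>xs. f (rev xs))
       = measure_pmf.expectation (replicate_pmf n p) f"
  using integrable_map_pmf_eq[of rev "replicate_pmf n p" f]
    integral_map_pmf[where g=rev and p="replicate_pmf n p" and f=f]
  by (simp_all add: map_pmf_rev_replicate_pmf)

lemma expectation_bind_pmf:
  fixes h :: "'b \<Rightarrow> real"
  assumes "\<And>y. y \<in> set_pmf (bind_pmf p k) \<Longrightarrow> \<bar>h y\<bar> \<le> c"
  shows "measure_pmf.expectation (bind_pmf p k) h
       = measure_pmf.expectation p (\<lambda>x. measure_pmf.expectation (k x) h)"
proof -
  \<comment> \<open>integral_bind needs a bound everywhere, so cut h off outside the support\<close>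
  define h' where "h' y = (if y \<in> set_pmf (bind_pmf p k) then h y else 0)" for y
  obtain y where "y \<in> set_pmf (bind_pmf p k)"
    by (meson all_not_in_conv set_pmf_not_empty)
  then have c: "0 \<le> c"
    using assms abs_ge_zero order_trans by blast
  have "measure_pmf.expectation (bind_pmf p k) h = measure_pmf.expectation (bind_pmf p k) h'"
    by (intro integral_cong_AE AE_pmfI) (auto simp: h'_def)
  also have "\<dots> = measure_pmf.expectation p (\<lambda>x. measure_pmf.expectation (k x) h')"
    unfolding measure_pmf_bind
    by (rule integral_bind[where B=c and B'=1 and K="count_space UNIV"])
       (use assms c in \<open>auto simp: h'_def measure_pmf_in_subprob_algebra measure_pmf.emeasure_space_1
         intro: measure_pmf.finite_measure\<close>)
  also have "\<dots> = measure_pmf.expectation p (\<lambda>x. measure_pmf.expectation (k x) h)"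
    by (intro integral_cong_AE AE_pmfI integral_cong_AE) (auto simp: h'_def)
  finally show ?thesis .
qed

lemma
  fixes f :: "'a \<Rightarrow> real"
  assumes f: "integrable (measure_pmf p) f"
  shows integrable_sum_list_replicate_pmf:
      "integrable (measure_pmf (replicate_pmf n p)) (\<lambda>xs. sum_list (map f xs))"
    and expectation_sum_list_replicate_pmf:
      "measure_pmf.expectation (replicate_pmf n p) (\<lambda>xs. sum_list (map f xs))
       = n * measure_pmf.expectation p f"
proof (induction n)
  case (Suc n)
  let ?S = "\<lambda>xs. sum_list (map f xs)" and ?P = "pair_pmf p (replicate_pmf n p)"
  have fst: "integrable (measure_pmf ?P) (\<lambda>z. f (fst z))"
    using integrable_map_pmf_eq[of fst ?P f] f by (simp add: map_fst_pair_pmf)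
  have snd: "integrable (measure_pmf ?P) (\<lambda>z. ?S (snd z))"
    using integrable_map_pmf_eq[of snd ?P ?S] Suc.IH(1) by (simp add: map_snd_pair_pmf)
  { case 1 show ?case
      unfolding replicate_pmf_Suc_Cons integrable_map_pmf_eq using fst snd
      by (simp add: case_prod_unfold)
  next
    case 2 show ?case
      unfolding replicate_pmf_Suc_Cons integral_map_pmf using fst snd Suc.IH(2) expectation_pair_pmf_snd[of p _ ?S]
      by (simp add: case_prod_unfold algebra_simps) }
qed (simp_all add: integrable_measure_pmf_finite)

lemma expectation_sum_list_square_replicate_pmf:
  fixes y :: "'a \<Rightarrow> real" and c :: real
  assumes bound: "\<And>x. \<bar>y x\<bar> \<le> c" and centered: "measure_pmf.expectation p y = 0"
  shows "measure_pmf.expectation (replicate_pmf n p) (\<lambda>xs. (sum_list (map y xs))\<^sup>2)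
       = n * measure_pmf.expectation p (\<lambda>x. (y x)\<^sup>2)"
proof (induction n)
  case (Suc n)
  let ?S = "\<lambda>xs. sum_list (map y xs)" and ?E = "measure_pmf.expectation"
  have square_bound: "\<bar>(?S xs)\<^sup>2\<bar> \<le> (length xs * c)\<^sup>2" for xs
    using square_bound_sum_list[OF bound, where xs=xs] by simp
  have int_y: "integrable (measure_pmf p) y"
    using bound by (auto intro: integrable_pmf_bounded)
  have "\<bar>(y x)\<^sup>2\<bar> \<le> c\<^sup>2" for x
    using square_bound[of "[x]"] by simp
  then have int_y2: "integrable (measure_pmf p) (\<lambda>x. (y x)\<^sup>2)"
    by (intro integrable_pmf_bounded)
  have int_S2: "integrable (measure_pmf (replicate_pmf n p)) (\<lambda>xs. (?S xs)\<^sup>2)"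
    by (rule integrable_pmf_bounded[where B="(n * c)\<^sup>2"])
       (use square_bound in \<open>auto dest!: set_pmf_replicate_pmfD\<close>)
  have step: "?E p (\<lambda>x. (?S xs + y x)\<^sup>2) = (?S xs)\<^sup>2 + ?E p (\<lambda>x. (y x)\<^sup>2)" for xs
  proof -
    have "?E p (\<lambda>x. (?S xs + y x)\<^sup>2) = ?E p (\<lambda>x. (?S xs)\<^sup>2 + 2 * ?S xs * y x + (y x)\<^sup>2)"
      by (simp add: power2_sum algebra_simps)
    also have "\<dots> = (?S xs)\<^sup>2 + 2 * ?S xs * ?E p y + ?E p (\<lambda>x. (y x)\<^sup>2)"
      using int_y int_y2 by simp
    finally show ?thesis
      using centered by simp
  qed
  have "\<bar>(?S zs)\<^sup>2\<bar> \<le> (Suc n * c)\<^sup>2" if "zs \<in> set_pmf (replicate_pmf (Suc n) p)" for zs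
    using square_bound[of zs] set_pmf_replicate_pmfD[OF that] by simp
  then have "?E (replicate_pmf (Suc n) p) (\<lambda>xs. (?S xs)\<^sup>2)
      = ?E (replicate_pmf n p) (\<lambda>xs. ?E p (\<lambda>x. (?S (xs @ [x]))\<^sup>2))"
    unfolding replicate_pmf_Suc_snoc by (subst expectation_bind_pmf) auto
  also have "\<dots> = ?E (replicate_pmf n p) (\<lambda>xs. (?S xs)\<^sup>2 + ?E p (\<lambda>x. (y x)\<^sup>2))"
    using step by (simp add: add.commute)
  also have "\<dots> = Suc n * ?E p (\<lambda>x. (y x)\<^sup>2)"
    using int_S2 Suc.IH by (simp add: algebra_simps)
  finally show ?case .
qed simp

section \<open>Maxima of partial sums\<close>

definition prefix_sum :: "('a \<Rightarrow> real) \<Rightarrow> 'a list \<Rightarrow> nat \<Rightarrow> real" where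
  "prefix_sum f xs k = sum_list (map f (take k xs))"

fun max_prefix_sum :: "('a \<Rightarrow> real) \<Rightarrow> 'a list \<Rightarrow> real" where
  "max_prefix_sum f [] = 0"
| "max_prefix_sum f (x # xs) = max 0 (f x + max_prefix_sum f xs)"

fun max_term :: "('a \<Rightarrow> real) \<Rightarrow> 'a list \<Rightarrow> real" where
  "max_term f [] = 0"
| "max_term f (x # xs) = max (f x) (max_term f xs)"

lemma max_prefix_sum_nonneg: "0 \<le> max_prefix_sum f xs"
  by (induction xs) auto

lemma sum_list_le_max_prefix_sum: "sum_list (map f xs) \<le> max_prefix_sum f xs"
  by (induction xs) auto

lemma max_prefix_sum_append_le: "max_prefix_sum f xs \<le> max_prefix_sum f (xs @ ys)"
  by (induction xs) (auto simp: max_prefix_sum_nonneg)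

lemma sum_list_add_max_prefix_sum_le:
  "sum_list (map f xs) + max_prefix_sum f ys \<le> max_prefix_sum f (xs @ ys)"
  by (induction xs) auto

lemma max_prefix_sum_le_sum_list_abs: "max_prefix_sum f xs \<le> sum_list (map (\<lambda>x. \<bar>f x\<bar>) xs)"
proof (induction xs)
  case (Cons x xs)
  have "0 \<le> sum_list (map (\<lambda>x. \<bar>f x\<bar>) xs)"
    by (rule sum_list_nonneg) auto
  with Cons show ?case
    by simp
qed simp

lemma max_prefix_sum_mono_add:
  assumes "\<And>x. x \<in> set xs \<Longrightarrow> f x \<le> g x + h x" and "\<And>x. 0 \<le> h x"
  shows "max_prefix_sum f xs \<le> max_prefix_sum g xs + sum_list (map h xs)"
  using assms(1)
proof (induction xs)
  case (Cons x xs)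
  let ?G = "g x + max_prefix_sum g xs"
  have "0 \<le> sum_list (map h xs)"
    by (rule sum_list_nonneg) (auto intro: assms(2))
  moreover have "max_prefix_sum f xs \<le> max_prefix_sum g xs + sum_list (map h xs)"
    using Cons by simp
  moreover have "f x \<le> g x + h x"
    using Cons.prems by simp
  ultimately show ?case
    using assms(2)[of x] max.cobounded1[of 0 ?G] max.cobounded2[of 0 ?G]
    unfolding max_prefix_sum.simps list.map sum_list.Cons
    by (intro max.boundedI) linarith+
qed simp

lemma max_prefix_sum_attained: "\<exists>k\<le>length xs. max_prefix_sum f xs = prefix_sum f xs k"
proof (induction xs)
  case (Cons x xs)
  then obtain k where k: "k \<le> length xs" "max_prefix_sum f xs = prefix_sum f xs k"
    by blast
  show ?case
  proof (cases "0 \<le> f x + max_prefix_sum f xs")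
    case True
    then show ?thesis
      using k by (intro exI[of _ "Suc k"]) (simp add: prefix_sum_def)
  qed (auto simp: prefix_sum_def)
qed (simp add: prefix_sum_def)

lemma max_term_nonneg: "0 \<le> max_term f xs"
  by (induction xs) auto

lemma max_term_append: "max_term f (xs @ ys) = max (max_term f xs) (max_term f ys)"
  by (induction xs) (auto simp: max_term_nonneg max.assoc)

lemma running_maxima_snoc:
  fixes L X :: "'a \<Rightarrow> real"
  defines "B ys \<equiv> max_term L ys + max_prefix_sum X ys + max_prefix_sum (\<lambda>g. - X g) (rev ys)"
  shows "sum_list (map X xs) + L x \<le> B (xs @ [x])" and "B xs - X x \<le> B (xs @ [x])"
proof -
  have "max_term L xs \<le> max_term L (xs @ [x])" and "L x \<le> max_term L (xs @ [x])"
    by (simp_all add: max_term_append)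
  moreover have "max_prefix_sum X xs \<le> max_prefix_sum X (xs @ [x])"
    and "sum_list (map X xs) \<le> max_prefix_sum X (xs @ [x])"
    using max_prefix_sum_append_le[of X xs "[x]"] sum_list_add_max_prefix_sum_le[of X xs "[x]"]
      max_prefix_sum_nonneg[of X "[x]"]
    by simp_all
  moreover have "max_prefix_sum (\<lambda>g. - X g) (rev xs) - X x \<le> max_prefix_sum (\<lambda>g. - X g) (rev (xs @ [x]))"
    and "0 \<le> max_prefix_sum (\<lambda>g. - X g) (rev (xs @ [x]))"
    by simp_all
  ultimately show "sum_list (map X xs) + L x \<le> B (xs @ [x])" and "B xs - X x \<le> B (xs @ [x])"
    using max_term_nonneg[of L xs] unfolding B_def by linarith+
qed

lemma max_term_le_excess:
  "0 \<le> K \<Longrightarrow> max_term f xs \<le> K + sum_list (map (\<lambda>x. max 0 (f x - K)) xs)"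
proof (induction xs)
  case (Cons x xs)
  have "0 \<le> sum_list (map (\<lambda>x. max 0 (f x - K)) xs)"
    by (rule sum_list_nonneg) auto
  with Cons show ?case
    by (auto simp: max_def)
qed simp

lemma max_term_le_sum_list_abs: "max_term f xs \<le> sum_list (map (\<lambda>x. \<bar>f x\<bar>) xs)"
  using max_term_le_excess[of 0 f xs] sum_list_mono[of xs "\<lambda>x. max 0 (f x)" "\<lambda>x. \<bar>f x\<bar>"]
  by fastforce

lemma
  fixes y :: "'a \<Rightarrow> real" and c :: real
  assumes bound: "\<And>x. \<bar>y x\<bar> \<le> c" and "j \<le> n"
  shows integrable_prefix_sum_square:
      "integrable (measure_pmf (replicate_pmf n p)) (\<lambda>xs. (prefix_sum y xs j)\<^sup>2)"
    and expectation_prefix_sum_square_le: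
      "measure_pmf.expectation p y = 0 \<Longrightarrow>
       measure_pmf.expectation (replicate_pmf n p) (\<lambda>xs. (prefix_sum y xs j)\<^sup>2) \<le> j * c\<^sup>2"
proof -
  let ?S = "\<lambda>xs. (sum_list (map y xs))\<^sup>2"
  have take: "map_pmf (take j) (replicate_pmf n p) = replicate_pmf j p"
    using \<open>j \<le> n\<close> by (rule map_pmf_take_replicate_pmf)
  have "integrable (measure_pmf (replicate_pmf j p)) ?S"
    by (rule integrable_pmf_bounded[where B="(j * c)\<^sup>2"])
       (use square_bound_sum_list[OF bound] in \<open>auto dest!: set_pmf_replicate_pmfD\<close>)
  then show "integrable (measure_pmf (replicate_pmf n p)) (\<lambda>xs. (prefix_sum y xs j)\<^sup>2)"
    using integrable_map_pmf_eq[of "take j" "replicate_pmf n p" ?S]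
    by (simp add: take prefix_sum_def)
  assume "measure_pmf.expectation p y = 0"
  have "measure_pmf.expectation (replicate_pmf n p) (\<lambda>xs. (prefix_sum y xs j)\<^sup>2)
      = j * measure_pmf.expectation p (\<lambda>x. (y x)\<^sup>2)"
    using integral_map_pmf[where g="take j" and p="replicate_pmf n p" and f="?S"]
      expectation_sum_list_square_replicate_pmf[OF bound \<open>measure_pmf.expectation p y = 0\<close>]
    by (simp add: take prefix_sum_def)
  also have "\<dots> \<le> j * c\<^sup>2"
  proof -
    have "(y x)\<^sup>2 \<le> c\<^sup>2" for x
      using square_bound_sum_list[OF bound, where xs="[x]"] by simp
    then show ?thesis
      by (intro mult_left_mono measure_pmf.integral_le_const integrable_pmf_bounded[where B="c\<^sup>2"])
         (auto intro: AE_I2)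
  qed
  finally show "measure_pmf.expectation (replicate_pmf n p) (\<lambda>xs. (prefix_sum y xs j)\<^sup>2) \<le> j * c\<^sup>2" .
qed

lemma le_mean_of_square_le:
  fixes p W t :: real
  assumes "t > 0" and "p\<^sup>2 \<le> W"
  shows "p \<le> (W / t + t) / 2"
proof -
  have "2 * p * t \<le> p\<^sup>2 + t\<^sup>2"
    using sum_squares_bound[of p t] by (simp add: power2_eq_square)
  also have "\<dots> \<le> W + t\<^sup>2"
    using assms(2) by simp
  finally show ?thesis
    using assms(1) by (simp add: field_simps power2_eq_square)
qed

lemma max_prefix_sum_le_block_squares:
  fixes f :: "'a \<Rightarrow> real" and c :: real
  assumes bound: "\<And>x. \<bar>f x\<bar> \<le> c" and "L > 0" and "t > 0"
  shows "max_prefix_sum f xs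
    \<le> c * L + ((\<Sum>q\<le>length xs div L. (prefix_sum f xs (q * L))\<^sup>2) / t + t) / 2"
proof -
  obtain k where k: "k \<le> length xs" "max_prefix_sum f xs = prefix_sum f xs k"
    using max_prefix_sum_attained by blast
  define q where "q = k div L"
  let ?rest = "take (k mod L) (drop (q * L) xs)"
  have "take k xs = take (q * L) xs @ ?rest"
    by (metis q_def div_mult_mod_eq take_add)
  then have "prefix_sum f xs k = prefix_sum f xs (q * L) + sum_list (map f ?rest)"
    by (simp add: prefix_sum_def)
  also have "sum_list (map f ?rest) \<le> c * L"
  proof -
    have "sum_list (map f ?rest) \<le> length ?rest * c"
      using bound by (intro sum_list_le_length_mult) (auto simp: abs_le_iff)
    also have "\<dots> \<le> L * c"
      using bound[of undefined] mod_less_divisor[OF \<open>L > 0\<close>, of k] by (intro mult_right_mono) auto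
    finally show ?thesis
      by (simp add: mult.commute)
  qed
  also have "prefix_sum f xs (q * L) \<le> ((\<Sum>q\<le>length xs div L. (prefix_sum f xs (q * L))\<^sup>2) / t + t) / 2"
  proof (rule le_mean_of_square_le[OF \<open>t > 0\<close>])
    have "q \<le> length xs div L"
      unfolding q_def using k(1) by (rule div_le_mono)
    then show "(prefix_sum f xs (q * L))\<^sup>2 \<le> (\<Sum>q\<le>length xs div L. (prefix_sum f xs (q * L))\<^sup>2)"
      by (intro member_le_sum) auto
  qed
  finally show ?thesis
    using k(2) by linarith
qed

lemma
  fixes f :: "'a \<Rightarrow> real"
  assumes f: "integrable (measure_pmf p) f"
  shows integrable_max_prefix_sum: "integrable (measure_pmf (replicate_pmf n p)) (max_prefix_sum f)"
    and integrable_max_term: "integrable (measure_pmf (replicate_pmf n p)) (max_term f)"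
proof -
  have sum_abs: "integrable (measure_pmf (replicate_pmf n p)) (\<lambda>xs. sum_list (map (\<lambda>x. \<bar>f x\<bar>) xs))"
    using f by (intro integrable_sum_list_replicate_pmf) simp
  show "integrable (measure_pmf (replicate_pmf n p)) (max_prefix_sum f)"
    using order_trans[OF max_prefix_sum_le_sum_list_abs abs_ge_self] max_prefix_sum_nonneg[of f]
    by (intro Bochner_Integration.integrable_bound[OF sum_abs] AE_I2) auto
  show "integrable (measure_pmf (replicate_pmf n p)) (max_term f)"
    using order_trans[OF max_term_le_sum_list_abs abs_ge_self] max_term_nonneg[of f]
    by (intro Bochner_Integration.integrable_bound[OF sum_abs] AE_I2) auto
qed

lemma
  fixes y :: "'a \<Rightarrow> real" and c :: real and L :: nat
  assumes bound: "\<And>x. \<bar>y x\<bar> \<le> c"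
  shows integrable_block_squares:
      "integrable (measure_pmf (replicate_pmf n p)) (\<lambda>xs. \<Sum>q\<le>n div L. (prefix_sum y xs (q * L))\<^sup>2)"
    and expectation_block_squares_le:
      "measure_pmf.expectation p y = 0 \<Longrightarrow>
       measure_pmf.expectation (replicate_pmf n p) (\<lambda>xs. \<Sum>q\<le>n div L. (prefix_sum y xs (q * L))\<^sup>2)
       \<le> (n div L + 1) * (n * c\<^sup>2)"
proof -
  let ?E = "measure_pmf.expectation" and ?R = "replicate_pmf n p"
  have endpoint: "q * L \<le> n" if "q \<le> n div L" for q
    using that by (metis div_times_less_eq_dividend le_trans mult_le_mono1)
  show "integrable (measure_pmf ?R) (\<lambda>xs. \<Sum>q\<le>n div L. (prefix_sum y xs (q * L))\<^sup>2)"
    using endpoint by (intro Bochner_Integration.integrable_sum integrable_prefix_sum_square[OF bound]) auto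
  assume centered: "?E p y = 0"
  have "?E ?R (\<lambda>xs. \<Sum>q\<le>n div L. (prefix_sum y xs (q * L))\<^sup>2)
      = (\<Sum>q\<le>n div L. ?E ?R (\<lambda>xs. (prefix_sum y xs (q * L))\<^sup>2))"
    using endpoint by (intro Bochner_Integration.integral_sum integrable_prefix_sum_square[OF bound]) auto
  also have "\<dots> \<le> (\<Sum>q\<le>n div L. n * c\<^sup>2)"
  proof (intro sum_mono)
    fix q assume "q \<in> {..n div L}"
    then have "q * L \<le> n"
      by (simp add: endpoint)
    then have "real (q * L) * c\<^sup>2 \<le> n * c\<^sup>2"
      by (intro mult_right_mono of_nat_mono) auto
    then show "?E ?R (\<lambda>xs. (prefix_sum y xs (q * L))\<^sup>2) \<le> n * c\<^sup>2"
      using expectation_prefix_sum_square_le[OF bound \<open>q * L \<le> n\<close> centered] by linarith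
  qed
  finally show "?E ?R (\<lambda>xs. \<Sum>q\<le>n div L. (prefix_sum y xs (q * L))\<^sup>2) \<le> (n div L + 1) * (n * c\<^sup>2)"
    by simp
qed

text \<open>Within a block of length L the partial sums move by at most c L, and the partial sums at the
  block endpoints are controlled in L^2, each having second moment at most n c^2.\<close>

lemma expectation_max_prefix_sum_le_blocks:
  fixes y :: "'a \<Rightarrow> real" and c t :: real and L :: nat
  assumes bound: "\<And>x. \<bar>y x\<bar> \<le> c" and centered: "measure_pmf.expectation p y = 0"
    and "L > 0" and "t > 0"
  shows "measure_pmf.expectation (replicate_pmf n p) (max_prefix_sum y)
    \<le> c * L + ((n div L + 1) * (n * c\<^sup>2) / t + t) / 2"
proof -
  let ?E = "measure_pmf.expectation" and ?R = "replicate_pmf n p"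
  define W where "W xs = (\<Sum>q\<le>n div L. (prefix_sum y xs (q * L))\<^sup>2)" for xs
  have int_W: "integrable (measure_pmf ?R) W"
    unfolding W_def[abs_def] by (rule integrable_block_squares[OF bound])
  have "AE xs in measure_pmf ?R. max_prefix_sum y xs \<le> c * L + (W xs / t + t) / 2"
    using AE_replicate_pmf[of n p]
  proof eventually_elim
    case (elim xs)
    then show ?case
      using max_prefix_sum_le_block_squares[OF bound \<open>L > 0\<close> \<open>t > 0\<close>, where xs=xs]
      by (simp add: W_def)
  qed
  moreover have "integrable (measure_pmf p) y"
    using bound by (auto intro: integrable_pmf_bounded)
  ultimately have "?E ?R (max_prefix_sum y) \<le> ?E ?R (\<lambda>xs. c * L + (W xs / t + t) / 2)"
    using int_W by (intro integral_mono_AE integrable_max_prefix_sum) auto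
  also have "\<dots> = c * L + (?E ?R W / t + t) / 2"
    using int_W by simp
  also have "\<dots> \<le> c * L + ((n div L + 1) * (n * c\<^sup>2) / t + t) / 2"
    using expectation_block_squares_le[OF bound centered] \<open>t > 0\<close>
    by (simp add: W_def[abs_def] divide_right_mono)
  finally show ?thesis .
qed

lemma expectation_max_prefix_sum_centered:
  fixes y :: "'a \<Rightarrow> real" and c \<epsilon> :: real
  assumes bound: "\<And>x. \<bar>y x\<bar> \<le> c" and centered: "measure_pmf.expectation p y = 0" and "\<epsilon> > 0"
  shows "\<exists>C. \<forall>n. measure_pmf.expectation (replicate_pmf n p) (max_prefix_sum y) \<le> \<epsilon> * n + C"
proof -
  define L where "L = nat \<lceil>c\<^sup>2 / \<epsilon>\<^sup>2\<rceil> + 1"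
  have "L > 0"
    by (simp add: L_def)
  have "c\<^sup>2 / \<epsilon>\<^sup>2 \<le> L"
    unfolding L_def by linarith
  then have L_large: "c\<^sup>2 / (L * \<epsilon>) \<le> \<epsilon>"
    using \<open>\<epsilon> > 0\<close> \<open>L > 0\<close> by (simp add: field_simps power2_eq_square)
  have "measure_pmf.expectation (replicate_pmf n p) (max_prefix_sum y)
      \<le> \<epsilon> * n + (c * L + (c\<^sup>2 / \<epsilon> + \<epsilon>) / 2)" for n
  proof -
    define t where "t = \<epsilon> * (n + 1)"
    have "t > 0"
      using \<open>\<epsilon> > 0\<close> by (simp add: t_def)
    have "(n div L + 1) * (n * c\<^sup>2) / t = (real (n div L) + 1) * c\<^sup>2 / \<epsilon> * (n / (n + 1))"
      unfolding t_def using \<open>\<epsilon> > 0\<close> by (simp add: field_simps)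
    also have "\<dots> \<le> (real (n div L) + 1) * c\<^sup>2 / \<epsilon>"
      using \<open>\<epsilon> > 0\<close> by (intro mult_left_le) (auto simp: field_simps)
    also have "\<dots> \<le> (real n / real L + 1) * c\<^sup>2 / \<epsilon>"
      using of_nat_div_le_of_nat[of n L, where 'a=real] \<open>\<epsilon> > 0\<close>
      by (intro divide_right_mono mult_right_mono) auto
    also have "\<dots> = real n * (c\<^sup>2 / (real L * \<epsilon>)) + c\<^sup>2 / \<epsilon>"
      using \<open>L > 0\<close> \<open>\<epsilon> > 0\<close> by (simp add: field_simps)
    also have "\<dots> \<le> \<epsilon> * n + c\<^sup>2 / \<epsilon>"
      using mult_left_mono[OF L_large, of "real n"] by (simp add: mult.commute)
    finally have "c * L + ((n div L + 1) * (n * c\<^sup>2) / t + t) / 2 \<le> c * L + (\<epsilon> * n + c\<^sup>2 / \<epsilon> + t) / 2"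
      by (intro add_left_mono divide_right_mono add_right_mono) auto
    also have "\<dots> = \<epsilon> * n + (c * L + (c\<^sup>2 / \<epsilon> + \<epsilon>) / 2)"
      unfolding t_def by (simp add: field_simps)
    finally show ?thesis
      using expectation_max_prefix_sum_le_blocks[OF bound centered \<open>L > 0\<close> \<open>t > 0\<close>, of n] by linarith
  qed
  then show ?thesis
    by blast
qed

lemma expectation_tail_small:
  fixes f :: "'a \<Rightarrow> real"
  assumes f: "integrable (measure_pmf p) f" and "\<eta> > 0"
  shows "\<exists>K\<ge>0. measure_pmf.expectation p (\<lambda>x. max 0 (\<bar>f x\<bar> - K)) < \<eta>"
proof -
  define s where "s i x = max 0 (\<bar>f x\<bar> - real i)" for i x
  have "(\<lambda>i. measure_pmf.expectation p (s i)) \<longlonglongrightarrow> measure_pmf.expectation p (\<lambda>x. 0)"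
  proof (rule integral_dominated_convergence[where w="\<lambda>x. \<bar>f x\<bar>"])
    show "AE x in measure_pmf p. (\<lambda>i. s i x) \<longlonglongrightarrow> 0"
    proof (rule AE_I2)
      fix x
      have "eventually (\<lambda>i. s i x = 0) sequentially"
        unfolding s_def eventually_sequentially
        by (rule exI[of _ "nat \<lceil>\<bar>f x\<bar>\<rceil>"]) linarith
      then show "(\<lambda>i. s i x) \<longlonglongrightarrow> 0"
        by (rule tendsto_eventually)
    qed
  qed (use f in \<open>auto simp: s_def intro: AE_I2\<close>)
  then have "eventually (\<lambda>i. measure_pmf.expectation p (s i) < \<eta>) sequentially"
    using \<open>\<eta> > 0\<close> order_tendstoD(2) by simp
  then obtain N where "measure_pmf.expectation p (s N) < \<eta>"
    by (auto simp: eventually_sequentially)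
  then show ?thesis
    by (intro exI[of _ "real N"]) (simp add: s_def[abs_def])
qed

lemma sum_list_map_const: "sum_list (map (\<lambda>_. a) xs) = length xs * (a::real)"
  by (induction xs) (auto simp: algebra_simps)

lemma max_prefix_sum_le_shifted:
  fixes f g e :: "'a \<Rightarrow> real" and m :: real
  assumes "\<And>x. f x \<le> g x + e x" and "\<And>x. 0 \<le> e x"
  shows "max_prefix_sum f xs \<le> max_prefix_sum (\<lambda>x. g x - m) xs + length xs * max m 0 + sum_list (map e xs)"
proof -
  have "max_prefix_sum f xs \<le> max_prefix_sum g xs + sum_list (map e xs)"
    by (rule max_prefix_sum_mono_add) (use assms in auto)
  moreover have "max_prefix_sum g xs \<le> max_prefix_sum (\<lambda>x. g x - m) xs + sum_list (map (\<lambda>_. max m 0) xs)"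
    by (rule max_prefix_sum_mono_add) auto
  ultimately show ?thesis
    by (simp add: sum_list_map_const)
qed

lemma expectation_max_prefix_sum_le_shifted:
  fixes f g e :: "'a \<Rightarrow> real" and m :: real
  assumes f: "integrable (measure_pmf p) f" and g: "integrable (measure_pmf p) g"
    and e: "integrable (measure_pmf p) e"
    and le: "\<And>x. f x \<le> g x + e x" and nonneg: "\<And>x. 0 \<le> e x"
  shows "measure_pmf.expectation (replicate_pmf n p) (max_prefix_sum f)
    \<le> measure_pmf.expectation (replicate_pmf n p) (max_prefix_sum (\<lambda>x. g x - m))
      + n * max m 0 + n * measure_pmf.expectation p e"
proof -
  let ?R = "replicate_pmf n p" and ?y = "\<lambda>x. g x - m"
  have int_y: "integrable (measure_pmf p) ?y"
    using g by simp
  have "AE xs in measure_pmf ?R.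
      max_prefix_sum f xs \<le> max_prefix_sum ?y xs + n * max m 0 + sum_list (map e xs)"
    using AE_replicate_pmf[of n p]
    by eventually_elim (use max_prefix_sum_le_shifted[OF le nonneg] in auto)
  moreover have "integrable (measure_pmf ?R) (\<lambda>xs. max_prefix_sum ?y xs + n * max m 0 + sum_list (map e xs))"
    using integrable_max_prefix_sum[OF int_y] integrable_sum_list_replicate_pmf[OF e]
    by (intro Bochner_Integration.integrable_add) auto
  ultimately have "measure_pmf.expectation ?R (max_prefix_sum f)
      \<le> measure_pmf.expectation ?R (\<lambda>xs. max_prefix_sum ?y xs + n * max m 0 + sum_list (map e xs))"
    by (intro integral_mono_AE integrable_max_prefix_sum[OF f])
  also have "\<dots> = measure_pmf.expectation ?R (max_prefix_sum ?y) + n * max m 0 + n * measure_pmf.expectation p e"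
    using integrable_max_prefix_sum[OF int_y] integrable_sum_list_replicate_pmf[OF e]
    by (simp add: expectation_sum_list_replicate_pmf[OF e])
  finally show ?thesis .
qed

text \<open>Truncate f at level K: the truncated, centred walk is handled by
  expectation_max_prefix_sum_centered, and the excesses over K contribute little on average.\<close>

lemma expectation_max_prefix_sum_le:
  fixes f :: "'a \<Rightarrow> real" and \<epsilon> :: real
  assumes f: "integrable (measure_pmf p) f" and "\<epsilon> > 0"
  shows "\<exists>C. \<forall>n. measure_pmf.expectation (replicate_pmf n p) (max_prefix_sum f)
            \<le> n * (max (measure_pmf.expectation p f) 0 + \<epsilon>) + C"
proof -
  let ?E = "measure_pmf.expectation"
  define \<eta> where "\<eta> = \<epsilon> / 3"
  have "\<eta> > 0"
    using \<open>\<epsilon> > 0\<close> by (simp add: \<eta>_def)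
  obtain K where "K \<ge> 0" and K: "?E p (\<lambda>x. max 0 (\<bar>f x\<bar> - K)) < \<eta>"
    using expectation_tail_small[OF f \<open>\<eta> > 0\<close>] by blast
  define excess where "excess x = max 0 (\<bar>f x\<bar> - K)" for x
  define g where "g x = max (- K) (min K (f x))" for x
  define m where "m = ?E p g"
  have g_bound: "\<bar>g x\<bar> \<le> K" for x
    using \<open>K \<ge> 0\<close> by (auto simp: g_def)
  have int_g: "integrable (measure_pmf p) g"
    using g_bound by (auto intro: integrable_pmf_bounded)
  have int_excess: "integrable (measure_pmf p) excess"
    unfolding excess_def using f by (intro integrable_max) auto
  have "\<bar>m\<bar> \<le> K"
    unfolding m_def using g_bound int_g
    by (intro order_trans[OF integral_abs_bound] measure_pmf.integral_le_const AE_I2) auto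
  then have y_bound: "\<bar>g x - m\<bar> \<le> 2 * K" for x
    using g_bound[of x] by auto
  have y_centered: "?E p (\<lambda>x. g x - m) = 0"
    unfolding m_def using int_g by simp
  have "m \<le> ?E p (\<lambda>x. f x + excess x)"
    unfolding m_def using int_g f int_excess by (intro integral_mono) (auto simp: g_def excess_def)
  then have m_le: "max m 0 \<le> max (?E p f) 0 + \<eta>"
    using f int_excess K \<open>\<eta> > 0\<close> by (auto simp: excess_def)
  obtain C where C: "\<And>n. ?E (replicate_pmf n p) (max_prefix_sum (\<lambda>x. g x - m)) \<le> \<eta> * n + C"
    using expectation_max_prefix_sum_centered[OF y_bound y_centered \<open>\<eta> > 0\<close>] by blast
  have "?E (replicate_pmf n p) (max_prefix_sum f) \<le> n * (max (?E p f) 0 + \<epsilon>) + C" for n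
  proof -
    have "?E (replicate_pmf n p) (max_prefix_sum f)
        \<le> ?E (replicate_pmf n p) (max_prefix_sum (\<lambda>x. g x - m)) + n * max m 0 + n * ?E p excess"
      by (rule expectation_max_prefix_sum_le_shifted[OF f int_g int_excess])
         (auto simp: g_def excess_def)
    also have "\<dots> \<le> \<eta> * n + C + n * (max (?E p f) 0 + \<eta>) + n * \<eta>"
      using C[of n] mult_left_mono[OF m_le, of "real n"] mult_left_mono[OF less_imp_le[OF K], of "real n"]
      unfolding excess_def[abs_def] by linarith
    also have "\<dots> = n * (max (?E p f) 0 + \<epsilon>) + C"
      by (simp add: \<eta>_def algebra_simps)
    finally show ?thesis .
  qed
  then show ?thesis
    by blast
qed

lemma expectation_max_term_le:
  fixes f :: "'a \<Rightarrow> real" and \<epsilon> :: real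
  assumes f: "integrable (measure_pmf p) f" and "\<epsilon> > 0"
  shows "\<exists>C. \<forall>n. measure_pmf.expectation (replicate_pmf n p) (max_term f) \<le> n * \<epsilon> + C"
proof -
  let ?E = "measure_pmf.expectation"
  obtain K where "K \<ge> 0" and K: "?E p (\<lambda>x. max 0 (\<bar>f x\<bar> - K)) < \<epsilon>"
    using expectation_tail_small[OF f \<open>\<epsilon> > 0\<close>] by blast
  define excess where "excess x = max 0 (\<bar>f x\<bar> - K)" for x
  have int_excess: "integrable (measure_pmf p) excess"
    unfolding excess_def using f by (intro integrable_max) auto
  have "?E (replicate_pmf n p) (max_term f) \<le> n * \<epsilon> + K" for n
  proof -
    have "max_term f xs \<le> K + sum_list (map excess xs)" for xs
    proof -
      have "sum_list (map (\<lambda>x. max 0 (f x - K)) xs) \<le> sum_list (map excess xs)"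
        by (rule sum_list_mono) (auto simp: excess_def)
      then show ?thesis
        using max_term_le_excess[OF \<open>K \<ge> 0\<close>, of f xs] by linarith
    qed
    then have "?E (replicate_pmf n p) (max_term f) \<le> ?E (replicate_pmf n p) (\<lambda>xs. K + sum_list (map excess xs))"
      using integrable_sum_list_replicate_pmf[OF int_excess]
      by (intro integral_mono integrable_max_term[OF f]) auto
    also have "\<dots> = K + n * ?E p excess"
      using integrable_sum_list_replicate_pmf[OF int_excess] expectation_sum_list_replicate_pmf[OF int_excess]
      by simp
    also have "\<dots> \<le> K + n * \<epsilon>"
      using K by (intro add_left_mono mult_left_mono) (auto simp: excess_def[abs_def])
    finally show ?thesis
      by simp
  qed
  then show ?thesis
    by blast
qed

lemma ln_add_one_le: "ln (real n + 1) \<le> ln 2 + ln (real n)"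
proof (cases "n = 0")
  case False
  then have "ln (real n + 1) \<le> ln (2 * real n)"
    by (intro ln_mono) auto
  with False show ?thesis
    by (simp add: ln_mult)
qed simp

lemma LIMSEQ_div_of_linear_bounds:
  fixes I r :: "nat \<Rightarrow> real" and l :: real
  assumes lower: "\<And>n. n * l \<le> I n"
    and upper: "\<And>\<epsilon>. \<epsilon> > 0 \<Longrightarrow> \<exists>C. \<forall>n. I n \<le> n * (l + \<epsilon>) + C + r n"
    and sublinear: "(\<lambda>n. r n / n) \<longlonglongrightarrow> 0"
  shows "(\<lambda>n. I n / n) \<longlonglongrightarrow> l"
proof (rule LIMSEQ_I)
  fix e :: real
  assume "0 < e"
  then obtain C where C: "\<And>n. I n \<le> n * (l + e / 2) + C + r n"
    using upper[of "e / 2"] by auto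
  have "(\<lambda>n. (C + r n) / n) \<longlonglongrightarrow> 0"
    using tendsto_add[OF lim_const_over_n[of C] sublinear] by (simp add: add_divide_distrib)
  moreover have "e / 2 > 0"
    using \<open>0 < e\<close> by simp
  ultimately obtain N where N: "\<And>n. n \<ge> N \<Longrightarrow> norm ((C + r n) / n - 0) < e / 2"
    by (blast dest: LIMSEQ_D)
  have "\<bar>I n / n - l\<bar> < e" if "max N 1 \<le> n" for n
  proof -
    have "0 < real n" and "N \<le> n"
      using that by simp_all
    then have "l \<le> I n / n" and "I n / n \<le> l + e / 2 + (C + r n) / n"
      using lower[of n] C[of n] by (simp_all add: field_simps)
    moreover have "\<bar>(C + r n) / n\<bar> < e / 2"
      using N[OF \<open>N \<le> n\<close>] by (simp only: real_norm_def diff_zero)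
    ultimately show ?thesis
      using abs_ge_self[of "(C + r n) / n"] by linarith
  qed
  then show "\<exists>N. \<forall>n\<ge>N. norm (I n / real n - l) < e"
    by (intro exI[of _ "max N 1"]) simp
qed

lemma integrable_of_nn_integral_powr:
  fixes f :: "'a \<Rightarrow> real" and \<delta> :: real
  assumes nonneg: "\<And>x. x \<in> set_pmf p \<Longrightarrow> 0 \<le> f x" and "0 \<le> \<delta>"
    and finite: "(\<integral>\<^sup>+x. ennreal (f x powr (1 + \<delta>)) \<partial>measure_pmf p) < \<infinity>"
  shows "integrable (measure_pmf p) f"
proof -
  have "t \<le> 1 + t powr (1 + \<delta>)" if "0 \<le> t" for t :: real
  proof (cases "t \<le> 1")
    case False
    then have "t powr 1 \<le> t powr (1 + \<delta>)"
      using \<open>0 \<le> \<delta>\<close> by (intro powr_mono) auto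
    then show ?thesis
      using False by simp
  qed (use powr_ge_zero[of t "1 + \<delta>"] in linarith)
  then have "ennreal (norm (f x)) \<le> 1 + ennreal (f x powr (1 + \<delta>))" if "x \<in> set_pmf p" for x
    using nonneg[OF that] ennreal_leI[of "norm (f x)" "1 + f x powr (1 + \<delta>)"] by (simp add: ennreal_plus)
  then have "(\<integral>\<^sup>+x. ennreal (norm (f x)) \<partial>measure_pmf p)
      \<le> (\<integral>\<^sup>+x. 1 + ennreal (f x powr (1 + \<delta>)) \<partial>measure_pmf p)"
    by (intro nn_integral_mono_AE AE_pmfI)
  also have "\<dots> = 1 + (\<integral>\<^sup>+x. ennreal (f x powr (1 + \<delta>)) \<partial>measure_pmf p)"
    by (simp add: nn_integral_add measure_pmf.emeasure_space_1)
  also have "\<dots> < \<infinity>"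
    using finite by simp
  finally show ?thesis
    by (simp add: integrable_iff_bounded)
qed

definition mprod :: "'k::field mat2 list \<Rightarrow> 'k mat2" where
  "mprod xs = foldl mmult mone xs"

definition upper_sl2 :: "'k::field mat2 \<Rightarrow> bool" where
  "upper_sl2 g \<longleftrightarrow> mdet g = 1 \<and> entry21 g = 0"

fun entry12 :: "'k::field mat2 \<Rightarrow> 'k" where
  "entry12 (a, b, c, d) = b"

definition log_alpha :: "('k::field \<Rightarrow> real) \<Rightarrow> 'k mat2 \<Rightarrow> real" where
  "log_alpha v g = ln (v (entry11 g))"

definition log_norm :: "('k::field \<Rightarrow> real) \<Rightarrow> 'k mat2 \<Rightarrow> real" where
  "log_norm v g = ln (opnorm v g)"

lemma mprod_Nil: "mprod [] = (1, 0, 0, 1)"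
  by (simp add: mprod_def mone_def)

lemma mprod_snoc: "mprod (xs @ [x]) = mmult (mprod xs) x"
  by (simp add: mprod_def)

lemma upper_sl2_cases:
  assumes "upper_sl2 g"
  obtains a b where "a \<noteq> 0" and "g = (a, b, 0, inverse a)"
proof -
  obtain a b c d where g: "g = (a, b, c, d)"
    by (cases g)
  with assms have "c = 0" and "a * d = 1"
    by (auto simp: upper_sl2_def)
  then have "a \<noteq> 0" and "d = inverse a"
    by (auto simp: inverse_unique)
  with g \<open>c = 0\<close> show ?thesis
    using that by blast
qed

lemma upper_sl2_mmult: "upper_sl2 g \<Longrightarrow> upper_sl2 h \<Longrightarrow> upper_sl2 (mmult g h)"
  by (elim upper_sl2_cases) (simp add: upper_sl2_def field_simps)

lemma upper_sl2_mprod: "(\<And>g. g \<in> set xs \<Longrightarrow> upper_sl2 g) \<Longrightarrow> upper_sl2 (mprod xs)"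
proof (induction xs rule: rev_induct)
  case Nil
  show ?case
    by (simp add: mprod_Nil upper_sl2_def)
next
  case (snoc x xs)
  then show ?case
    by (simp add: mprod_snoc upper_sl2_mmult)
qed

lemma conv_pow_eq_map_mprod: "conv_pow \<mu> n = map_pmf mprod (replicate_pmf n \<mu>)"
proof (induction n)
  case (Suc n)
  have "map_pmf mprod (replicate_pmf (Suc n) \<mu>)
      = bind_pmf (replicate_pmf n \<mu>) (\<lambda>xs. map_pmf (\<lambda>h. mmult (mprod xs) h) \<mu>)"
    unfolding replicate_pmf_Suc_snoc by (simp add: map_bind_pmf pmf.map_comp o_def mprod_snoc)
  then show ?case
    using Suc by (simp add: bind_map_pmf)
qed (simp add: mprod_def)

lemma expectation_log_norm_conv_pow:
  "measure_pmf.expectation (conv_pow \<mu> n) (log_norm v)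
     = measure_pmf.expectation (replicate_pmf n \<mu>) (\<lambda>xs. log_norm v (mprod xs))"
  by (simp add: conv_pow_eq_map_mprod)

context
  fixes v :: "'k::field \<Rightarrow> real"
  assumes v: "abs_value v"
begin

lemma abs_value_nonneg: "0 \<le> v x"
  and abs_value_eq_0_iff: "v x = 0 \<longleftrightarrow> x = 0"
  and abs_value_mult: "v (x * y) = v x * v y"
  and abs_value_triangle: "v (x + y) \<le> v x + v y"
  using v by (auto simp: abs_value_def)

lemma abs_value_zero: "v 0 = 0"
  by (simp add: abs_value_eq_0_iff)

lemma abs_value_pos: "x \<noteq> 0 \<Longrightarrow> 0 < v x"
  using abs_value_nonneg[of x] abs_value_eq_0_iff[of x] by linarith

lemma abs_value_one: "v 1 = 1"
  using abs_value_mult[of 1 1] abs_value_eq_0_iff[of 1] by simp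

lemma abs_value_inverse: "v (inverse x) = inverse (v x)"
proof (cases "x = 0")
  case False
  then have "v x * v (inverse x) = 1"
    by (simp flip: abs_value_mult add: abs_value_one)
  then show ?thesis
    by (rule inverse_unique[symmetric])
qed (simp add: abs_value_zero)

lemma maxnorm_mapply_le:
  "maxnorm v (mapply (a, b, c, d) x) \<le> 2 * max (max (v a) (v b)) (max (v c) (v d)) * maxnorm v x"
proof -
  obtain x1 x2 where x: "x = (x1, x2)"
    by (cases x)
  define M where "M = max (max (v a) (v b)) (max (v c) (v d))"
  have row: "v (s * x1 + t * x2) \<le> 2 * M * max (v x1) (v x2)" if "v s \<le> M" "v t \<le> M" for s t
  proof -
    have "v (s * x1 + t * x2) \<le> v s * v x1 + v t * v x2"
      using abs_value_triangle[of "s * x1" "t * x2"] by (simp add: abs_value_mult)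
    also have "\<dots> \<le> M * max (v x1) (v x2) + M * max (v x1) (v x2)"
      using that order_trans[OF abs_value_nonneg that(1)]
      by (intro add_mono mult_mono) (auto simp: abs_value_nonneg)
    finally show ?thesis
      by simp
  qed
  show ?thesis
    unfolding x mapply.simps maxnorm.simps M_def[symmetric]
    by (intro max.boundedI row) (simp_all add: M_def)
qed

lemma
  shows opnorm_ge_column1: "max (v a) (v c) \<le> opnorm v (a, b, c, d)"
    and opnorm_ge_column2: "max (v b) (v d) \<le> opnorm v (a, b, c, d)"
    and opnorm_le_twice_max_entry: "opnorm v (a, b, c, d) \<le> 2 * max (max (v a) (v b)) (max (v c) (v d))"
proof -
  define M where "M = max (max (v a) (v b)) (max (v c) (v d))"
  define S where "S = {maxnorm v (mapply (a, b, c, d) x) / maxnorm v x | x. x \<noteq> (0, 0)}"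
  have opnorm: "opnorm v (a, b, c, d) = Sup S"
    by (simp add: opnorm_def S_def)
  have bound: "r \<le> 2 * M" if "r \<in> S" for r
  proof -
    have "\<exists>x. r = maxnorm v (mapply (a, b, c, d) x) / maxnorm v x \<and> x \<noteq> (0, 0)"
      using that unfolding S_def by (simp only: mem_Collect_eq)
    then obtain x1 x2 where x: "(x1, x2) \<noteq> (0, 0)"
      and r: "r = maxnorm v (mapply (a, b, c, d) (x1, x2)) / maxnorm v (x1, x2)"
      by auto
    have "0 < maxnorm v (x1, x2)"
      using x abs_value_pos[of x1] abs_value_pos[of x2] by (auto simp: less_max_iff_disj)
    then show ?thesis
      using maxnorm_mapply_le[of a b c d "(x1, x2)", folded M_def] by (simp add: r divide_le_eq)
  qed
  have col1: "max (v a) (v c) \<in> S"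
    unfolding S_def by (rule CollectI, rule exI[of _ "(1, 0)"]) (simp add: abs_value_one abs_value_zero)
  have col2: "max (v b) (v d) \<in> S"
    unfolding S_def by (rule CollectI, rule exI[of _ "(0, 1)"]) (simp add: abs_value_one abs_value_zero)
  have "bdd_above S"
    using bound by (auto simp: bdd_above_def)
  show "max (v a) (v c) \<le> opnorm v (a, b, c, d)"
    unfolding opnorm by (rule cSup_upper[OF col1 \<open>bdd_above S\<close>])
  show "max (v b) (v d) \<le> opnorm v (a, b, c, d)"
    unfolding opnorm by (rule cSup_upper[OF col2 \<open>bdd_above S\<close>])
  show "opnorm v (a, b, c, d) \<le> 2 * max (max (v a) (v b)) (max (v c) (v d))"
    unfolding opnorm M_def[symmetric] using col1 bound by (intro cSup_least) auto
qed

section \<open>Products of upper triangular matrices\<close>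

lemma upper_sl2_opnorm_ge:
  assumes "upper_sl2 g"
  shows "v (entry11 g) \<le> opnorm v g" "inverse (v (entry11 g)) \<le> opnorm v g"
    "v (entry12 g) \<le> opnorm v g"
proof -
  obtain a b where "a \<noteq> 0" and g: "g = (a, b, 0, inverse a)"
    using assms by (rule upper_sl2_cases)
  show "v (entry11 g) \<le> opnorm v g" "inverse (v (entry11 g)) \<le> opnorm v g" "v (entry12 g) \<le> opnorm v g"
    using opnorm_ge_column1[where a=a and b=b and c=0 and d="inverse a"]
      opnorm_ge_column2[where a=a and b=b and c=0 and d="inverse a"]
    by (simp_all add: g abs_value_inverse)
qed

lemma upper_sl2_entry11_pos: "upper_sl2 g \<Longrightarrow> 0 < v (entry11 g)"
  by (elim upper_sl2_cases) (simp add: abs_value_pos)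

lemma upper_sl2_opnorm_ge_1:
  assumes "upper_sl2 g"
  shows "1 \<le> opnorm v g"
proof (cases "v (entry11 g) \<le> 1")
  case True
  then have "1 \<le> inverse (v (entry11 g))"
    using upper_sl2_entry11_pos[OF assms] by (simp add: one_le_inverse)
  then show ?thesis
    using upper_sl2_opnorm_ge(2)[OF assms] by linarith
next
  case False
  then show ?thesis
    using upper_sl2_opnorm_ge(1)[OF assms] by linarith
qed

lemma upper_sl2_log_norm_nonneg: "upper_sl2 g \<Longrightarrow> 0 \<le> log_norm v g"
  using upper_sl2_opnorm_ge_1 by (simp add: log_norm_def)

lemma upper_sl2_abs_log_alpha_le:
  assumes "upper_sl2 g"
  shows "\<bar>log_alpha v g\<bar> \<le> log_norm v g"
proof -
  have pos: "0 < v (entry11 g)"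
    using assms by (rule upper_sl2_entry11_pos)
  have "ln (v (entry11 g)) \<le> ln (opnorm v g)"
    using pos upper_sl2_opnorm_ge(1)[OF assms] by simp
  moreover have "- ln (v (entry11 g)) = ln (inverse (v (entry11 g)))"
    using pos by (simp add: ln_inverse)
  moreover have "\<dots> \<le> ln (opnorm v g)"
    using pos upper_sl2_opnorm_ge(2)[OF assms] by (intro ln_mono) auto
  ultimately show ?thesis
    by (simp add: log_alpha_def log_norm_def)
qed

lemma upper_sl2_entry12_le: "upper_sl2 g \<Longrightarrow> v (entry12 g) \<le> exp (log_norm v g)"
  using upper_sl2_opnorm_ge[of g] upper_sl2_entry11_pos[of g] by (simp add: log_norm_def)

lemma entry11_mprod:
  assumes "\<And>g. g \<in> set xs \<Longrightarrow> upper_sl2 g"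
  shows "v (entry11 (mprod xs)) = exp (sum_list (map (log_alpha v) xs))"
  using assms
proof (induction xs rule: rev_induct)
  case (snoc x xs)
  have "upper_sl2 x" and "upper_sl2 (mprod xs)"
    using snoc.prems by (simp_all add: upper_sl2_mprod)
  obtain a b where "a \<noteq> 0" and x: "x = (a, b, 0, inverse a)"
    using \<open>upper_sl2 x\<close> by (rule upper_sl2_cases)
  obtain A B where "A \<noteq> 0" and P: "mprod xs = (A, B, 0, inverse A)"
    using \<open>upper_sl2 (mprod xs)\<close> by (rule upper_sl2_cases)
  show ?case
    using snoc \<open>a \<noteq> 0\<close> abs_value_pos[of a]
    by (simp add: mprod_snoc P x abs_value_mult log_alpha_def exp_add)
qed (simp add: mprod_Nil abs_value_one)

text \<open>The (1,2)-entry of a product g_1 ... g_n of upper triangular matrices is the sum over i of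
  alpha_1 ... alpha_(i-1) beta_i alpha_(i+1)^-1 ... alpha_n^-1; each term is bounded by the largest
  norm of a factor times the largest prefix product and the largest inverse suffix product.\<close>

lemma entry12_mprod_le:
  assumes "\<And>g. g \<in> set xs \<Longrightarrow> upper_sl2 g"
  shows "v (entry12 (mprod xs)) \<le> length xs * exp (max_term (log_norm v) xs
    + max_prefix_sum (log_alpha v) xs + max_prefix_sum (\<lambda>g. - log_alpha v g) (rev xs))"
  using assms
proof (induction xs rule: rev_induct)
  case (snoc x xs)
  let ?X = "log_alpha v" and ?L = "log_norm v"
  let ?B = "\<lambda>ys. max_term ?L ys + max_prefix_sum ?X ys + max_prefix_sum (\<lambda>g. - ?X g) (rev ys)"
  have "upper_sl2 x" and "upper_sl2 (mprod xs)"
    using snoc.prems by (simp_all add: upper_sl2_mprod)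
  obtain a b where "a \<noteq> 0" and x: "x = (a, b, 0, inverse a)"
    using \<open>upper_sl2 x\<close> by (rule upper_sl2_cases)
  obtain A B where "A \<noteq> 0" and P: "mprod xs = (A, B, 0, inverse A)"
    using \<open>upper_sl2 (mprod xs)\<close> by (rule upper_sl2_cases)
  have vA: "v A = exp (sum_list (map ?X xs))"
    using entry11_mprod[of xs] snoc.prems P by simp
  have vd: "v (inverse a) = exp (- ?X x)"
    using abs_value_pos[OF \<open>a \<noteq> 0\<close>]
    by (simp add: x log_alpha_def exp_minus abs_value_inverse)
  have vb: "v b \<le> exp (?L x)"
    using upper_sl2_entry12_le[of x] snoc.prems x by simp
  have IH: "v B \<le> length xs * exp (?B xs)"
    using snoc P by simp
  have "v (entry12 (mprod (xs @ [x]))) \<le> v A * v b + v B * v (inverse a)"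
    using abs_value_triangle[of "A * b" "B * inverse a"]
    by (simp add: mprod_snoc P x abs_value_mult)
  also have "\<dots> \<le> exp (sum_list (map ?X xs)) * exp (?L x) + (length xs * exp (?B xs)) * exp (- ?X x)"
    using IH vb abs_value_nonneg[of A] abs_value_nonneg[of B]
    by (intro add_mono mult_left_mono mult_right_mono) (simp_all add: vA vd)
  also have "\<dots> = exp (sum_list (map ?X xs) + ?L x) + length xs * exp (?B xs - ?X x)"
    by (simp only: exp_add[symmetric] mult.assoc add.assoc diff_conv_add_uminus)
  also have "\<dots> \<le> exp (?B (xs @ [x])) + length xs * exp (?B (xs @ [x]))"
    using running_maxima_snoc[where L="?L" and X="?X" and xs=xs and x=x] by (intro add_mono mult_left_mono) simp_all
  also have "\<dots> = length (xs @ [x]) * exp (?B (xs @ [x]))"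
    by (simp add: algebra_simps)
  finally show ?case .
qed (simp add: mprod_Nil abs_value_zero)

section \<open>Expected growth of the norm\<close>

lemma log_alpha_mprod:
  "(\<And>g. g \<in> set xs \<Longrightarrow> upper_sl2 g) \<Longrightarrow> log_alpha v (mprod xs) = sum_list (map (log_alpha v) xs)"
  by (simp add: log_alpha_def entry11_mprod)

lemma opnorm_mprod_le:
  assumes upper: "\<And>g. g \<in> set xs \<Longrightarrow> upper_sl2 g"
  defines "E \<equiv> exp (max_term (log_norm v) xs + max_prefix_sum (log_alpha v) xs
    + max_prefix_sum (\<lambda>g. - log_alpha v g) (rev xs))"
  shows "opnorm v (mprod xs) \<le> 2 * ((real (length xs) + 1) * E)"
proof -
  let ?X = "log_alpha v"
  define S where "S = sum_list (map ?X xs)"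
  have "upper_sl2 (mprod xs)"
    using upper by (rule upper_sl2_mprod)
  then obtain A B where "A \<noteq> 0" and P: "mprod xs = (A, B, 0, inverse A)"
    by (rule upper_sl2_cases)
  have vA: "v A = exp S"
    using entry11_mprod[of xs] upper P by (simp add: S_def)
  have "S \<le> max_prefix_sum ?X xs"
    unfolding S_def by (rule sum_list_le_max_prefix_sum)
  then have "v A \<le> E"
    using max_term_nonneg[of "log_norm v" xs] max_prefix_sum_nonneg[of "\<lambda>g. - ?X g" "rev xs"]
    by (simp add: vA E_def)
  have "- S = sum_list (map (\<lambda>g. - ?X g) (rev xs))"
    by (simp add: S_def uminus_sum_list_map o_def flip: rev_map)
  also have "\<dots> \<le> max_prefix_sum (\<lambda>g. - ?X g) (rev xs)"
    by (rule sum_list_le_max_prefix_sum)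
  finally have "v (inverse A) \<le> E"
    using max_term_nonneg[of "log_norm v" xs] max_prefix_sum_nonneg[of ?X xs]
    by (simp add: abs_value_inverse vA E_def flip: exp_minus)
  moreover have "v B \<le> length xs * E"
    using entry12_mprod_le[of xs] upper P by (simp add: E_def)
  moreover have "0 < E" and "0 \<le> length xs * E"
    by (simp_all add: E_def)
  ultimately have "max (max (v A) (v B)) (max (v 0) (v (inverse A))) \<le> E + length xs * E"
    using \<open>v A \<le> E\<close> unfolding abs_value_zero by (intro max.boundedI) linarith+
  also have "\<dots> = (real (length xs) + 1) * E"
    by (simp add: algebra_simps)
  finally show ?thesis
    using opnorm_le_twice_max_entry[of A B 0 "inverse A"] unfolding P by linarith
qed

lemma log_norm_mprod_le:
  assumes upper: "\<And>g. g \<in> set xs \<Longrightarrow> upper_sl2 g"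
  shows "log_norm v (mprod xs) \<le> ln 2 + ln (real (length xs) + 1) + max_term (log_norm v) xs
    + max_prefix_sum (log_alpha v) xs + max_prefix_sum (\<lambda>g. - log_alpha v g) (rev xs)"
proof -
  let ?B = "max_term (log_norm v) xs + max_prefix_sum (log_alpha v) xs
    + max_prefix_sum (\<lambda>g. - log_alpha v g) (rev xs)"
  have "log_norm v (mprod xs) \<le> ln (2 * ((real (length xs) + 1) * exp ?B))"
    unfolding log_norm_def[of v "mprod xs"] using opnorm_mprod_le[where xs=xs, OF upper]
      upper_sl2_opnorm_ge_1[OF upper_sl2_mprod[where xs=xs, OF upper]]
    by (intro ln_mono) auto
  also have "\<dots> = ln 2 + ln (real (length xs) + 1) + ?B"
    by (simp add: ln_mult)
  finally show ?thesis
    by (simp add: add.assoc)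
qed

lemma integrable_log_alpha:
  assumes "\<And>g. g \<in> set_pmf \<mu> \<Longrightarrow> upper_sl2 g" and "integrable (measure_pmf \<mu>) (log_norm v)"
  shows "integrable (measure_pmf \<mu>) (log_alpha v)"
proof (rule Bochner_Integration.integrable_bound[OF assms(2)])
  show "AE g in measure_pmf \<mu>. norm (log_alpha v g) \<le> norm (log_norm v g)"
    using upper_sl2_abs_log_alpha_le[OF assms(1)] by (intro AE_pmfI) force
qed simp

lemma
  assumes upper: "\<And>g. g \<in> set_pmf \<mu> \<Longrightarrow> upper_sl2 g" and int: "integrable (measure_pmf \<mu>) (log_norm v)"
  shows integrable_log_norm_mprod:
      "integrable (measure_pmf (replicate_pmf n \<mu>)) (\<lambda>xs. log_norm v (mprod xs))"
    and expectation_log_norm_mprod_le: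
      "measure_pmf.expectation (replicate_pmf n \<mu>) (\<lambda>xs. log_norm v (mprod xs))
       \<le> ln 2 + ln (real n + 1) + measure_pmf.expectation (replicate_pmf n \<mu>) (max_term (log_norm v))
         + measure_pmf.expectation (replicate_pmf n \<mu>) (max_prefix_sum (log_alpha v))
         + measure_pmf.expectation (replicate_pmf n \<mu>) (max_prefix_sum (\<lambda>g. - log_alpha v g))"
proof -
  let ?R = "replicate_pmf n \<mu>"
  define G where "G xs = ln 2 + ln (real n + 1) + max_term (log_norm v) xs + max_prefix_sum (log_alpha v) xs
    + max_prefix_sum (\<lambda>g. - log_alpha v g) (rev xs)" for xs
  have int_alpha: "integrable (measure_pmf \<mu>) (log_alpha v)"
    using upper int by (rule integrable_log_alpha)
  have int_G: "integrable (measure_pmf ?R) G"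
    unfolding G_def using int int_alpha
    by (intro Bochner_Integration.integrable_add measure_pmf.integrable_const
        integrable_max_term integrable_max_prefix_sum
        iffD2[OF integrable_rev_replicate_pmf]) auto
  have bounds: "AE xs in measure_pmf ?R. 0 \<le> log_norm v (mprod xs) \<and> log_norm v (mprod xs) \<le> G xs"
    using AE_replicate_pmf[of n \<mu>]
  proof eventually_elim
    case (elim xs)
    then have upper_xs: "\<And>g. g \<in> set xs \<Longrightarrow> upper_sl2 g"
      using upper by auto
    show ?case
      using log_norm_mprod_le[where xs=xs, OF upper_xs]
        upper_sl2_log_norm_nonneg[OF upper_sl2_mprod[where xs=xs, OF upper_xs]] elim
      by (simp add: G_def)
  qed
  show int_mprod: "integrable (measure_pmf ?R) (\<lambda>xs. log_norm v (mprod xs))"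
  proof (rule Bochner_Integration.integrable_bound[OF int_G])
    show "AE xs in measure_pmf ?R. norm (log_norm v (mprod xs)) \<le> norm (G xs)"
      using bounds by eventually_elim auto
  qed simp
  have "AE xs in measure_pmf ?R. log_norm v (mprod xs) \<le> G xs"
    using bounds by eventually_elim auto
  then have "measure_pmf.expectation ?R (\<lambda>xs. log_norm v (mprod xs)) \<le> measure_pmf.expectation ?R G"
    using int_mprod int_G by (intro integral_mono_AE)
  also have "\<dots> = ln 2 + ln (real n + 1) + measure_pmf.expectation ?R (max_term (log_norm v))
         + measure_pmf.expectation ?R (max_prefix_sum (log_alpha v))
         + measure_pmf.expectation ?R (max_prefix_sum (\<lambda>g. - log_alpha v g))"
    unfolding G_def using int int_alpha
    by (simp add: integrable_max_term integrable_max_prefix_sum integrable_rev_replicate_pmf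
        expectation_rev_replicate_pmf[where f="max_prefix_sum (\<lambda>g. - log_alpha v g)"])
  finally show "measure_pmf.expectation ?R (\<lambda>xs. log_norm v (mprod xs))
       \<le> ln 2 + ln (real n + 1) + measure_pmf.expectation ?R (max_term (log_norm v))
         + measure_pmf.expectation ?R (max_prefix_sum (log_alpha v))
         + measure_pmf.expectation ?R (max_prefix_sum (\<lambda>g. - log_alpha v g))" .
qed

lemma expectation_log_norm_conv_pow_ge:
  assumes upper: "\<And>g. g \<in> set_pmf \<mu> \<Longrightarrow> upper_sl2 g" and int: "integrable (measure_pmf \<mu>) (log_norm v)"
  shows "n * \<bar>measure_pmf.expectation \<mu> (log_alpha v)\<bar> \<le> measure_pmf.expectation (conv_pow \<mu> n) (log_norm v)"
proof -
  let ?R = "replicate_pmf n \<mu>" and ?S = "\<lambda>xs. sum_list (map (log_alpha v) xs)"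
  have int_alpha: "integrable (measure_pmf \<mu>) (log_alpha v)"
    using upper int by (rule integrable_log_alpha)
  have "AE xs in measure_pmf ?R. \<bar>?S xs\<bar> \<le> log_norm v (mprod xs)"
    using AE_replicate_pmf[of n \<mu>]
  proof eventually_elim
    case (elim xs)
    then have "\<And>g. g \<in> set xs \<Longrightarrow> upper_sl2 g"
      using upper by auto
    then show ?case
      using upper_sl2_abs_log_alpha_le[OF upper_sl2_mprod] by (simp flip: log_alpha_mprod)
  qed
  then have "measure_pmf.expectation ?R (\<lambda>xs. \<bar>?S xs\<bar>) \<le> measure_pmf.expectation ?R (\<lambda>xs. log_norm v (mprod xs))"
    using integrable_sum_list_replicate_pmf[OF int_alpha] integrable_log_norm_mprod[OF upper int]
    by (intro integral_mono_AE) auto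
  moreover have "n * \<bar>measure_pmf.expectation \<mu> (log_alpha v)\<bar> \<le> measure_pmf.expectation ?R (\<lambda>xs. \<bar>?S xs\<bar>)"
    using integral_abs_bound[of ?R ?S] expectation_sum_list_replicate_pmf[OF int_alpha, of n]
    by (simp add: abs_mult)
  ultimately show ?thesis
    by (simp add: expectation_log_norm_conv_pow)
qed

lemma expectation_log_norm_conv_pow_le:
  assumes upper: "\<And>g. g \<in> set_pmf \<mu> \<Longrightarrow> upper_sl2 g" and int: "integrable (measure_pmf \<mu>) (log_norm v)"
    and "\<epsilon> > 0"
  shows "\<exists>C. \<forall>n. measure_pmf.expectation (conv_pow \<mu> n) (log_norm v)
    \<le> n * (\<bar>measure_pmf.expectation \<mu> (log_alpha v)\<bar> + \<epsilon>) + C + ln n"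
proof -
  let ?E = "measure_pmf.expectation" and ?m = "measure_pmf.expectation \<mu> (log_alpha v)"
  have int_alpha: "integrable (measure_pmf \<mu>) (log_alpha v)"
    using upper int by (rule integrable_log_alpha)
  have "\<epsilon> / 3 > 0"
    using \<open>\<epsilon> > 0\<close> by simp
  obtain C1 where C1: "\<And>n. ?E (replicate_pmf n \<mu>) (max_term (log_norm v)) \<le> n * (\<epsilon> / 3) + C1"
    using expectation_max_term_le[OF int \<open>\<epsilon> / 3 > 0\<close>] by blast
  obtain C2 where C2: "\<And>n. ?E (replicate_pmf n \<mu>) (max_prefix_sum (log_alpha v))
      \<le> n * (max ?m 0 + \<epsilon> / 3) + C2"
    using expectation_max_prefix_sum_le[OF int_alpha \<open>\<epsilon> / 3 > 0\<close>] by blast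
  obtain C3 where C3: "\<And>n. ?E (replicate_pmf n \<mu>) (max_prefix_sum (\<lambda>g. - log_alpha v g))
      \<le> n * (max (- ?m) 0 + \<epsilon> / 3) + C3"
    using expectation_max_prefix_sum_le[of \<mu> "\<lambda>g. - log_alpha v g", OF _ \<open>\<epsilon> / 3 > 0\<close>] int_alpha
    by auto
  have "?E (conv_pow \<mu> n) (log_norm v) \<le> n * (\<bar>?m\<bar> + \<epsilon>) + (2 * ln 2 + C1 + C2 + C3) + ln n" for n
  proof -
    have "max ?m 0 + max (- ?m) 0 = \<bar>?m\<bar>"
      by auto
    moreover have "n * (\<epsilon> / 3) + n * (max ?m 0 + \<epsilon> / 3) + n * (max (- ?m) 0 + \<epsilon> / 3)
        = n * (max ?m 0 + max (- ?m) 0 + \<epsilon>)"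
      by (simp add: algebra_simps)
    ultimately have "n * (\<epsilon> / 3) + n * (max ?m 0 + \<epsilon> / 3) + n * (max (- ?m) 0 + \<epsilon> / 3)
        = n * (\<bar>?m\<bar> + \<epsilon>)"
      by simp
    then show ?thesis
      unfolding expectation_log_norm_conv_pow
      using expectation_log_norm_mprod_le[OF upper int, of n] C1[of n] C2[of n] C3[of n]
        ln_add_one_le[of n]
      by linarith
  qed
  then show ?thesis
    by blast
qed

lemma expectation_log_alpha_symmetric:
  assumes upper: "\<And>g. g \<in> set_pmf \<mu> \<Longrightarrow> upper_sl2 g" and sym: "map_pmf minv_sl2 \<mu> = \<mu>"
  shows "measure_pmf.expectation \<mu> (log_alpha v) = 0"
proof -
  have "log_alpha v (minv_sl2 g) = - log_alpha v g" if "g \<in> set_pmf \<mu>" for g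
    using upper[OF that]
    by (elim upper_sl2_cases) (simp add: log_alpha_def abs_value_inverse ln_inverse abs_value_pos)
  then have "measure_pmf.expectation \<mu> (\<lambda>g. log_alpha v (minv_sl2 g))
      = measure_pmf.expectation \<mu> (\<lambda>g. - log_alpha v g)"
    by (intro integral_cong_AE AE_pmfI) auto
  moreover have "measure_pmf.expectation \<mu> (\<lambda>g. log_alpha v (minv_sl2 g))
      = measure_pmf.expectation \<mu> (log_alpha v)"
    using integral_map_pmf[where g=minv_sl2 and p=\<mu> and f="log_alpha v"] sym by simp
  ultimately show ?thesis
    by simp
qed

lemma expectation_log_entry11_square:
  assumes upper: "\<And>g. g \<in> set_pmf \<mu> \<Longrightarrow> upper_sl2 g"
  shows "measure_pmf.expectation \<mu> (\<lambda>g. ln (v ((entry11 g)\<^sup>2))) = 2 * measure_pmf.expectation \<mu> (log_alpha v)"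
proof -
  have "ln (v ((entry11 g)\<^sup>2)) = 2 * log_alpha v g" if "g \<in> set_pmf \<mu>" for g
    using upper_sl2_entry11_pos[OF upper[OF that]]
    by (simp add: log_alpha_def power2_eq_square abs_value_mult ln_mult)
  then have "measure_pmf.expectation \<mu> (\<lambda>g. ln (v ((entry11 g)\<^sup>2)))
      = measure_pmf.expectation \<mu> (\<lambda>g. 2 * log_alpha v g)"
    by (intro integral_cong_AE AE_pmfI) auto
  then show ?thesis
    by simp
qed

end

theorem proposition5p2:
  fixes v :: "'k::field \<Rightarrow> real" and \<mu> :: "'k mat2 pmf" and \<delta> :: real
  assumes "abs_value v" and "complete_wrt v"
    and upper: "\<forall>\<gamma>\<in>set_pmf \<mu>. mdet \<gamma> = 1 \<and> entry21 \<gamma> = 0"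
    and "\<delta> > 0"
    and moment: "(\<integral>\<^sup>+ \<gamma>. ennreal ((ln (opnorm v \<gamma>)) powr (1 + \<delta>)) \<partial>measure_pmf \<mu>) < \<infinity>"
  shows "((\<lambda>n. measure_pmf.expectation (conv_pow \<mu> n) (\<lambda>\<gamma>. ln (opnorm v \<gamma>)) / real n)
           \<longlonglongrightarrow> \<bar>measure_pmf.expectation \<mu> (\<lambda>\<gamma>. ln (v (entry11 \<gamma>)))\<bar>)
         \<and> \<bar>measure_pmf.expectation \<mu> (\<lambda>\<gamma>. ln (v (entry11 \<gamma>)))\<bar>
           = \<bar>measure_pmf.expectation \<mu> (\<lambda>\<gamma>. ln (v ((entry11 \<gamma>)\<^sup>2)))\<bar> / 2
         \<and> (map_pmf minv_sl2 \<mu> = \<mu> \<longrightarrow>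
           (\<lambda>n. measure_pmf.expectation (conv_pow \<mu> n) (\<lambda>\<gamma>. ln (opnorm v \<gamma>)) / real n) \<longlonglongrightarrow> 0)"
proof -
  have v: "abs_value v" by fact
  have upper': "\<And>g. g \<in> set_pmf \<mu> \<Longrightarrow> upper_sl2 g"
    using upper by (simp add: upper_sl2_def)
  have int: "integrable (measure_pmf \<mu>) (log_norm v)"
    using moment upper_sl2_log_norm_nonneg[OF v upper'] \<open>\<delta> > 0\<close>
    by (intro integrable_of_nn_integral_powr[of \<mu> _ \<delta>]) (auto simp: log_norm_def)
  have limit: "(\<lambda>n. measure_pmf.expectation (conv_pow \<mu> n) (log_norm v) / n)
      \<longlonglongrightarrow> \<bar>measure_pmf.expectation \<mu> (log_alpha v)\<bar>"
    using expectation_log_norm_conv_pow_ge[OF v upper' int]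
      expectation_log_norm_conv_pow_le[OF v upper' int] lim_ln_over_n
    by (rule LIMSEQ_div_of_linear_bounds)
  have square: "measure_pmf.expectation \<mu> (\<lambda>g. ln (v ((entry11 g)\<^sup>2)))
      = 2 * measure_pmf.expectation \<mu> (log_alpha v)"
    by (rule expectation_log_entry11_square[OF v]) (rule upper')
  have symmetric: "measure_pmf.expectation \<mu> (log_alpha v) = 0" if "map_pmf minv_sl2 \<mu> = \<mu>"
    by (rule expectation_log_alpha_symmetric[OF v]) (use upper' that in auto)
  show ?thesis
  proof (intro conjI impI)
    show "(\<lambda>n. measure_pmf.expectation (conv_pow \<mu> n) (\<lambda>\<gamma>. ln (opnorm v \<gamma>)) / real n)
        \<longlonglongrightarrow> \<bar>measure_pmf.expectation \<mu> (\<lambda>\<gamma>. ln (v (entry11 \<gamma>)))\<bar>"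
      using limit by (simp add: log_norm_def[abs_def] log_alpha_def[abs_def])
    show "\<bar>measure_pmf.expectation \<mu> (\<lambda>\<gamma>. ln (v (entry11 \<gamma>)))\<bar>
        = \<bar>measure_pmf.expectation \<mu> (\<lambda>\<gamma>. ln (v ((entry11 \<gamma>)\<^sup>2)))\<bar> / 2"
      using square by (simp add: abs_mult log_alpha_def[abs_def])
    assume "map_pmf minv_sl2 \<mu> = \<mu>"
    then show "(\<lambda>n. measure_pmf.expectation (conv_pow \<mu> n) (\<lambda>\<gamma>. ln (opnorm v \<gamma>)) / real n)
        \<longlonglongrightarrow> 0"
      using limit symmetric by (simp add: log_norm_def[abs_def])
  qed
qed

end
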